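(* Let $d\ge1$, $x_1<x_2$ real, $x_0\in[x_1,x_2]$. Let $p,q,r_1,\dots,r_d,s_1,\dots,s_d$ be continuous complex-valued functions on $[x_1,x_2]$, with $p$ continuously differentiable and $p(x)\ne0$, let $Ly=(py')'+qy$, $R_i[y]=r_iy+s_iy'$, and let $u_0$ be a nonvanishing solution of $Lu_0=0$ on $[x_1,x_2]$. With the generalized formal powers of the context, define for $\vec\lambda\in\mathbb C^d$ $$u_1=u_0\sum_{\mathbf n\in\mathbb Z_{\ge0}^d}\frac{1}{(2|\mathbf n|)!}\tilde X^{(2\mathbf n)}\lambda^{\mathbf n},\qquad u_2=u_0\sum_{\mathbf n\in\mathbb Z_{\ge0}^d}\frac{1}{(2|\mathbf n|+1)!}X^{(2\mathbf n+\frac1d\mathbf 1)}\lambda^{\mathbf n}.$$ Then for every fixed $\vec\lambda\in\mathbb C^d$ these series converge uniformly on $[x_1,x_2]$, and $u_1,u_2$ are linearly independent solutions of $$Ly=\sum_{i=1}^d\lambda_iR_i[y].$$ Their derivatives are given by $$u_1'=\frac{u_0'}{u_0}u_1+\frac{1}{pu_0}\sum_{\mathbf n\ge0,\ \mathbf n\ne0}\frac{1}{(2|\mathbf n|-1)!}\sum_{i=1}^d\tilde X^{(2\mathbf n-\delta_i)}\lambda^{\mathbf n},\qquad u_2'=\frac{u_0'}{u_0}u_2+\frac{1}{pu_0}\sum_{\mathbf n\ge0}\frac{1}{(2|\mathbf n|)!}\sum_{i=1}^dX^{(2\mathbf n-\delta_i+\frac1d\mathbf 1)}\lambda^{\mathbf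 n},$$ and $u_1(x_0)=u_0(x_0)$, $u_1'(x_0)=u_0'(x_0)$, $u_2(x_0)=0$, $u_2'(x_0)=\frac{1}{p(x_0)u_0(x_0)}$.
   Context: Notation: $\int f$ denotes $x\mapsto\int_{x_0}^x f(s)\,ds$; $|\mathbf j|=j_1+\cdots+j_d$; $\delta_i$ the $i$-th standard basis vector; $\mathbf 1=(1,\dots,1)$; $\lambda^{\mathbf n}=\lambda_1^{n_1}\cdots\lambda_d^{n_d}$. Generalized formal powers $\tilde X$: for $\mathbf j\in\mathbb Z^d$, admissible means at most one $j_i$ odd; $\tilde X^{(\mathbf 0)}\equiv1$; $\tilde X^{(\mathbf j)}\equiv0$ if some $j_i<0$; for admissible $\mathbf j\ge0$, $\mathbf j\ne\mathbf0$: if $|\mathbf j|$ is odd with odd entry $j_i$, $\tilde X^{(\mathbf j)}=|\mathbf j|\int u_0R_i[u_0\tilde X^{(\mathbf j-\delta_i)}]$; if $|\mathbf j|$ is even, $\tilde X^{(\mathbf j)}=|\mathbf j|\int\frac{1}{pu_0^2}\sum_{i=1}^d\tilde X^{(\mathbf j-\delta_i)}$. Generalized formal powers $X$: indexed by $\mathbf j=\mathbf m+\frac1d\mathbf 1$, $\mathbf m\in\mathbb Z^d$, $|\mathbf j|=|\mathbf m|+1$; admissible means at most one $m_i$ odd; $X^{(\frac1d\mathbf 1-\delta_i)}\equiv\frac1d$; $X^{(\mathbf m+\frac1d\mathbf 1)}\equiv0$ if some $m_i<0$ and $\mathbf m\notin\{-\delta_1,\dots,-\delta_d\}$; for admissible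 $\mathbf j$ with $\mathbf m\ge0$: if $|\mathbf j|$ is even (exactly one $m_i$ odd), $X^{(\mathbf j)}=|\mathbf j|\int u_0R_i[u_0X^{(\mathbf j-\delta_i)}]$ for that $i$; if $|\mathbf j|$ is odd, $X^{(\mathbf j)}=|\mathbf j|\int\frac{1}{pu_0^2}\sum_{i=1}^dX^{(\mathbf j-\delta_i)}$. *)

theory Defs
  imports "HOL-Analysis.Analysis"
begin

text \<open>Conventions: multi-indices in Z^d / N^d are functions on nat, only the entries
  with index below d are meaningful. The interval is I = {x1..x2}; derivatives are taken
  within I.\<close>

definition cint :: "real \<Rightarrow> (real \<Rightarrow> complex) \<Rightarrow> real \<Rightarrow> complex" where
  "cint x0 f x = (if x0 \<le> x then integral {x0..x} f else - integral {x..x0} f)"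

definition Rop :: "(nat \<Rightarrow> real \<Rightarrow> complex) \<Rightarrow> (nat \<Rightarrow> real \<Rightarrow> complex) \<Rightarrow> real set
    \<Rightarrow> nat \<Rightarrow> (real \<Rightarrow> complex) \<Rightarrow> real \<Rightarrow> complex" where
  "Rop r s I i y t = r i t * y t + s i t * vector_derivative y (at t within I)"

definition dminus :: "(nat \<Rightarrow> int) \<Rightarrow> nat \<Rightarrow> (nat \<Rightarrow> int)" where
  "dminus j i = j(i := j i - 1)"

text \<open>Level-indexed auxiliary: XtL ... k j is the value of the formal power tilde X^(j)
  assuming |j| = k.\<close>
primrec XtL :: "nat \<Rightarrow> (real \<Rightarrow> complex) \<Rightarrow> (real \<Rightarrow> complex) \<Rightarrow> (nat \<Rightarrow> real \<Rightarrow> complex)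
    \<Rightarrow> (nat \<Rightarrow> real \<Rightarrow> complex) \<Rightarrow> real \<Rightarrow> real set \<Rightarrow> nat \<Rightarrow> (nat \<Rightarrow> int) \<Rightarrow> real \<Rightarrow> complex" where
  "XtL d p u0 r s x0 I 0 j = (\<lambda>x. if (\<forall>i<d. j i = 0) then 1 else 0)"
| "XtL d p u0 r s x0 I (Suc k) j = (\<lambda>x.
     if (\<exists>i<d. j i < 0) then 0
     else if odd (Suc k) then
       (let i = (THE i. i < d \<and> odd (j i)) in
        of_nat (Suc k) * cint x0 (\<lambda>t. u0 t * Rop r s I i
            (\<lambda>t'. u0 t' * XtL d p u0 r s x0 I k (dminus j i) t') t) x)
     else of_nat (Suc k) * cint x0
            (\<lambda>t. (\<Sum>i<d. XtL d p u0 r s x0 I k (dminus j i) t) / (p t * u0 t ^ 2)) x)"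

definition Xtilde :: "nat \<Rightarrow> (real \<Rightarrow> complex) \<Rightarrow> (real \<Rightarrow> complex) \<Rightarrow> (nat \<Rightarrow> real \<Rightarrow> complex)
    \<Rightarrow> (nat \<Rightarrow> real \<Rightarrow> complex) \<Rightarrow> real \<Rightarrow> real set \<Rightarrow> (nat \<Rightarrow> int) \<Rightarrow> real \<Rightarrow> complex" where
  "Xtilde d p u0 r s x0 I j =
     (if (\<Sum>i<d. j i) < 0 then (\<lambda>_. 0) else XtL d p u0 r s x0 I (nat (\<Sum>i<d. j i)) j)"

text \<open>Level-indexed auxiliary for X^(m + 1/d 1): XL ... k m assumes |m| + 1 = k.\<close>
primrec XL :: "nat \<Rightarrow> (real \<Rightarrow> complex) \<Rightarrow> (real \<Rightarrow> complex) \<Rightarrow> (nat \<Rightarrow> real \<Rightarrow> complex)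
    \<Rightarrow> (nat \<Rightarrow> real \<Rightarrow> complex) \<Rightarrow> real \<Rightarrow> real set \<Rightarrow> nat \<Rightarrow> (nat \<Rightarrow> int) \<Rightarrow> real \<Rightarrow> complex" where
  "XL d p u0 r s x0 I 0 m = (\<lambda>x.
     if (\<exists>i<d. \<forall>l<d. m l = (if l = i then -1 else 0)) then 1 / of_nat d else 0)"
| "XL d p u0 r s x0 I (Suc k) m = (\<lambda>x.
     if (\<exists>i<d. m i < 0) then 0
     else if even (Suc k) then
       (let i = (THE i. i < d \<and> odd (m i)) in
        of_nat (Suc k) * cint x0 (\<lambda>t. u0 t * Rop r s I i
            (\<lambda>t'. u0 t' * XL d p u0 r s x0 I k (dminus m i) t') t) x)
     else of_nat (Suc k) * cint x0
            (\<lambda>t. (\<Sum>i<d. XL d p u0 r s x0 I k (dminus m i) t) / (p t * u0 t ^ 2)) x)"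

text \<open>Xgen ... m stands for X^(m + (1/d) 1).\<close>
definition Xgen :: "nat \<Rightarrow> (real \<Rightarrow> complex) \<Rightarrow> (real \<Rightarrow> complex) \<Rightarrow> (nat \<Rightarrow> real \<Rightarrow> complex)
    \<Rightarrow> (nat \<Rightarrow> real \<Rightarrow> complex) \<Rightarrow> real \<Rightarrow> real set \<Rightarrow> (nat \<Rightarrow> int) \<Rightarrow> real \<Rightarrow> complex" where
  "Xgen d p u0 r s x0 I m =
     (if (\<Sum>i<d. m i) + 1 < 0 then (\<lambda>_. 0) else XL d p u0 r s x0 I (nat ((\<Sum>i<d. m i) + 1)) m)"

text \<open>Multi-indices n in N^d with |n| <= N (partial sums ordered by total degree).\<close>
definition midx :: "nat \<Rightarrow> nat \<Rightarrow> (nat \<Rightarrow> nat) set" where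
  "midx d N = {n. (\<forall>i. d \<le> i \<longrightarrow> n i = 0) \<and> (\<Sum>i<d. n i) \<le> N}"

definition msize :: "nat \<Rightarrow> (nat \<Rightarrow> nat) \<Rightarrow> nat" where
  "msize d n = (\<Sum>i<d. n i)"

definition lampow :: "nat \<Rightarrow> (nat \<Rightarrow> complex) \<Rightarrow> (nat \<Rightarrow> nat) \<Rightarrow> complex" where
  "lampow d lam n = (\<Prod>i<d. lam i ^ n i)"

definition solves :: "nat \<Rightarrow> real set \<Rightarrow> (real \<Rightarrow> complex) \<Rightarrow> (real \<Rightarrow> complex)
    \<Rightarrow> (nat \<Rightarrow> real \<Rightarrow> complex) \<Rightarrow> (nat \<Rightarrow> real \<Rightarrow> complex) \<Rightarrow> (nat \<Rightarrow> complex)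
    \<Rightarrow> (real \<Rightarrow> complex) \<Rightarrow> bool" where
  "solves d I p q r s lam y \<longleftrightarrow>
     (\<exists>y1 y2. \<forall>x\<in>I. (y has_vector_derivative y1 x) (at x within I)
        \<and> ((\<lambda>t. p t * y1 t) has_vector_derivative y2 x) (at x within I)
        \<and> y2 x + q x * y x = (\<Sum>i<d. lam i * (r i x * y x + s i x * y1 x)))"

end

theory Submission
  imports Defs
begin

(* Writing y = u0 S and T = p u0\<^sup>2 S', the equation L y = \<Sum>i. \<lambda>i R_i[y] becomes the first-order
   system S' = \<gamma> T, T' = \<alpha> S + \<beta> T with \<gamma> = 1 / (p u0\<^sup>2), \<beta> = \<Sum>i. \<lambda>i s_i / p and
   \<alpha> = u0 \<Sum>i. \<lambda>i R_i[u0]. The generalized formal powers are built so that the parts A_k, B_k of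
   total degree |n| = k of the two series satisfy A_k' = \<gamma> B_k and B_{k+1}' = \<alpha> A_k + \<beta> B_k, and
   vanish at x0 for k \<ge> 1. Integrating these relations from x0 gives the Picard-type estimate
   |A_k|, |B_k| \<le> C K^k |x - x0|^k / k!, hence uniform convergence, and termwise differentiation
   shows that the limits solve the system. For u1 the data at x0 are (S, T) = (1, 0), for u2 they
   are (0, 1); this gives the initial values, and linear independence follows by evaluating at x0. *)

section \<open>Calculus on a compact interval\<close>

lemma cint_self [simp]: "cint x0 g x0 = 0"
  by (simp add: cint_def)

lemma has_vector_derivative_cint:
  assumes g: "continuous_on {a..b} g" and "x0 \<in> {a..b}" "x \<in> {a..b}"
  shows "(cint x0 g has_vector_derivative g x) (at x within {a..b})"
proof -
  have int: "g integrable_on {a..b}"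
    using g by (rule integrable_continuous_real)
  have cint_eq: "cint x0 g y = integral {a..y} g - integral {a..x0} g" if "y \<in> {a..b}" for y
  proof (cases "x0 \<le> y")
    case True
    have "g integrable_on {a..y}"
      using that by (intro integrable_on_subinterval[OF int]) auto
    then have "integral {a..x0} g + integral {x0..y} g = integral {a..y} g"
      using True assms by (intro Henstock_Kurzweil_Integration.integral_combine) auto
    then show ?thesis using True by (simp add: cint_def algebra_simps)
  next
    case False
    have "g integrable_on {a..x0}"
      using assms by (intro integrable_on_subinterval[OF int]) auto
    then have "integral {a..y} g + integral {y..x0} g = integral {a..x0} g"
      using False that by (intro Henstock_Kurzweil_Integration.integral_combine) auto
    then show ?thesis using False by (simp add: cint_def algebra_simps)
  qed
  have "((\<lambda>y. integral {a..y} g - integral {a..x0} g) has_vector_derivative g x - 0) (at x within {a..b})"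
    using assms by (intro has_vector_derivative_diff integral_has_vector_derivative) auto
  then have "((\<lambda>y. integral {a..y} g - integral {a..x0} g) has_vector_derivative g x) (at x within {a..b})"
    by simp
  then show ?thesis
    by (rule has_vector_derivative_transform[OF \<open>x \<in> {a..b}\<close>, rotated]) (simp add: cint_eq)
qed
lemma norm_le_power_if_derivative_le_power:
  fixes f f' :: "real \<Rightarrow> 'a::real_normed_vector"
  assumes "x0 \<in> {a..b}" "x \<in> {a..b}" and "f x0 = 0"
    and f': "\<And>t. t \<in> {a..b} \<Longrightarrow> (f has_vector_derivative f' t) (at t within {a..b})"
    and bound: "\<And>t. t \<in> {a..b} \<Longrightarrow> norm (f' t) \<le> c * \<bar>t - x0\<bar> ^ m"
  shows "norm (f x) \<le> c * \<bar>x - x0\<bar> ^ Suc m / Suc m"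
proof -
  have f'_open: "(f has_vector_derivative f' t) (at t)" if "a < t" "t < b" for t
    using f'[of t] that at_within_interior[of t "{a..b}"] by auto
  have f_cont: "continuous_on {u..v} f" if "{u..v} \<subseteq> {a..b}" for u v
    using continuous_on_vector_derivative[OF f'] that continuous_on_subset by blast
  consider "x0 < x" | "x = x0" | "x < x0" by linarith
  then show ?thesis
  proof cases
    case 1
    have "norm (f x - f x0) \<le> c * (x - x0) ^ Suc m / Suc m - c * (x0 - x0) ^ Suc m / Suc m"
    proof (rule differentiable_bound_general[OF 1])
      show "continuous_on {x0..x} f" using assms by (intro f_cont) auto
      show "continuous_on {x0..x} (\<lambda>t. c * (t - x0) ^ Suc m / Suc m)" by (intro continuous_intros) auto
      fix t assume t: "x0 < t" "t < x"
      show "(f has_vector_derivative f' t) (at t)" using t assms by (intro f'_open) auto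
      show "norm (f' t) \<le> c * (t - x0) ^ m" using bound[of t] t assms by auto
      have "((\<lambda>t. c * (t - x0) ^ Suc m / Suc m) has_real_derivative
          c * (of_nat (Suc m) * (1 * (t - x0) ^ (Suc m - Suc 0))) / Suc m) (at t)"
        by (intro DERIV_cdivide DERIV_cmult DERIV_power) (auto intro!: derivative_eq_intros)
      then show "((\<lambda>t. c * (t - x0) ^ Suc m / Suc m) has_vector_derivative c * (t - x0) ^ m) (at t)"
        by (simp add: has_real_derivative_iff_has_vector_derivative)
    qed
    then show ?thesis using 1 assms by simp
  next
    case 2
    then show ?thesis using assms by simp
  next
    case 3
    have "norm (f x0 - f x) \<le> - c * (x0 - x0) ^ Suc m / Suc m - - c * (x0 - x) ^ Suc m / Suc m"
    proof (rule differentiable_bound_general[OF 3])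
      show "continuous_on {x..x0} f" using assms by (intro f_cont) auto
      show "continuous_on {x..x0} (\<lambda>t. - c * (x0 - t) ^ Suc m / Suc m)" by (intro continuous_intros) auto
      fix t assume t: "x < t" "t < x0"
      show "(f has_vector_derivative f' t) (at t)" using t assms by (intro f'_open) auto
      show "norm (f' t) \<le> c * (x0 - t) ^ m" using bound[of t] t assms by (auto simp: abs_minus_commute)
      have "((\<lambda>t. - c * (x0 - t) ^ Suc m / Suc m) has_real_derivative
          - c * (of_nat (Suc m) * ((0 - 1) * (x0 - t) ^ (Suc m - Suc 0))) / Suc m) (at t)"
        by (intro DERIV_cdivide DERIV_cmult DERIV_power) (auto intro!: derivative_eq_intros)
      then show "((\<lambda>t. - c * (x0 - t) ^ Suc m / Suc m) has_vector_derivative c * (x0 - t) ^ m) (at t)"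
        by (simp add: has_real_derivative_iff_has_vector_derivative)
    qed
    then show ?thesis using 3 assms by (simp add: abs_minus_commute norm_minus_commute)
  qed
qed

lemma has_vector_derivative_series:
  fixes f f' :: "nat \<Rightarrow> real \<Rightarrow> 'a::banach"
  assumes "convex S"
    and f': "\<And>n x. x \<in> S \<Longrightarrow> (f n has_vector_derivative f' n x) (at x within S)"
    and uniform: "uniform_limit S (\<lambda>N x. \<Sum>n<N. f' n x) G sequentially"
    and sums: "\<And>x. x \<in> S \<Longrightarrow> (\<lambda>n. f n x) sums F x"
    and "x \<in> S"
  shows "(F has_vector_derivative G x) (at x within S)"
proof -
  have "\<exists>g. \<forall>x\<in>S. (\<lambda>n. f n x) sums g x \<and> (g has_derivative (\<lambda>h. h *\<^sub>R G x)) (at x within S)"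
  proof (rule has_derivative_series[where f'="\<lambda>n x h. h *\<^sub>R f' n x"])
    show "convex S" "x \<in> S" "(\<lambda>n. f n x) sums F x"
      using assms by auto
    show "(f n has_derivative (\<lambda>h. h *\<^sub>R f' n y)) (at y within S)" if "y \<in> S" for n y
      using f'[OF that] by (simp add: has_vector_derivative_def)
    fix e :: real assume "e > 0"
    with uniform have "\<forall>\<^sub>F N in sequentially. \<forall>y\<in>S. norm ((\<Sum>n<N. f' n y) - G y) \<le> e"
      unfolding uniform_limit_iff dist_norm by (auto elim!: allE[of _ e] eventually_mono)
    then show "\<forall>\<^sub>F N in sequentially. \<forall>y\<in>S. \<forall>h. norm ((\<Sum>n<N. h *\<^sub>R f' n y) - h *\<^sub>R G y) \<le> e * norm h"
    proof (rule eventually_mono, intro ballI allI)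
      fix N y h assume "\<forall>y\<in>S. norm ((\<Sum>n<N. f' n y) - G y) \<le> e" "y \<in> S"
      then have "\<bar>h\<bar> * norm ((\<Sum>n<N. f' n y) - G y) \<le> \<bar>h\<bar> * e"
        by (intro mult_left_mono) auto
      then show "norm ((\<Sum>n<N. h *\<^sub>R f' n y) - h *\<^sub>R G y) \<le> e * norm h"
        by (simp add: scaleR_sum_right[symmetric] scaleR_diff_right[symmetric] mult.commute)
    qed
  qed
  then obtain g where g: "\<And>y. y \<in> S \<Longrightarrow> (\<lambda>n. f n y) sums g y"
    and g': "(g has_derivative (\<lambda>h. h *\<^sub>R G x)) (at x within S)"
    using \<open>x \<in> S\<close> by blast
  have "F y = g y" if "y \<in> S" for y
    using sums[OF that] g[OF that] by (rule sums_unique2)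
  then show ?thesis
    unfolding has_vector_derivative_def by (rule has_derivative_transform[OF \<open>x \<in> S\<close> _ g'])
qed

lemma uniform_limit_mult_continuous:
  fixes c F :: "real \<Rightarrow> 'a::real_normed_algebra"
  assumes "uniform_limit {a..b} f F sequentially" "continuous_on {a..b} c" "continuous_on {a..b} F"
  shows "uniform_limit {a..b} (\<lambda>N x. c x * f N x) (\<lambda>x. c x * F x) sequentially"
  using assms
  by (intro uniform_lim_mult uniform_limit_const compact_imp_bounded compact_continuous_image compact_Icc)

lemma linearly_independent_by_values_at:
  fixes u v :: "real \<Rightarrow> complex"
  assumes "a < b" "x0 \<in> {a..b}" "u x0 \<noteq> 0" "v x0 = 0"
    and v': "(v has_vector_derivative v') (at x0 within {a..b})" "v' \<noteq> 0"
  shows "\<forall>c1 c2. (\<forall>x\<in>{a..b}. c1 * u x + c2 * v x = 0) \<longrightarrow> c1 = 0 \<and> c2 = 0"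
proof (intro allI impI)
  fix c1 c2 :: complex
  assume zero: "\<forall>x\<in>{a..b}. c1 * u x + c2 * v x = 0"
  then have "c1 * u x0 + c2 * v x0 = 0"
    using assms(2) by blast
  then have "c1 = 0"
    using assms(3,4) by simp
  with zero have "((\<lambda>x. c2 * v x) has_vector_derivative 0) (at x0 within {a..b})"
    using \<open>x0 \<in> {a..b}\<close> by (intro has_vector_derivative_transform[OF _ _ has_vector_derivative_const]) auto
  moreover have "((\<lambda>x. c2 * v x) has_vector_derivative c2 * v') (at x0 within {a..b})"
    using v'(1) by (rule has_vector_derivative_mult_right)
  ultimately have "c2 * v' = 0"
    using vector_derivative_within_closed_interval[OF \<open>a < b\<close> \<open>x0 \<in> {a..b}\<close>] by metis
  then show "c1 = 0 \<and> c2 = 0"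
    using \<open>c1 = 0\<close> v'(2) by simp
qed

lemma bounded_on_interval:
  fixes f :: "real \<Rightarrow> 'a::real_normed_vector"
  assumes "continuous_on {a..b} f"
  obtains C where "\<And>x. x \<in> {a..b} \<Longrightarrow> norm (f x) \<le> C"
proof -
  have "bounded (f ` {a..b})"
    by (intro compact_imp_bounded compact_continuous_image assms compact_Icc)
  then obtain C where "\<forall>x\<in>{a..b}. norm (f x) \<le> C"
    by (auto simp: bounded_iff)
  then show ?thesis using that by blast
qed

section \<open>Power series solutions of a linear first-order system\<close>

locale coupled_linear_system =
  fixes a b x0 :: real and \<alpha> \<beta> \<gamma> :: "real \<Rightarrow> complex"
  assumes x0_in: "x0 \<in> {a..b}"
    and continuous_coeffs:
      "continuous_on {a..b} \<alpha>" "continuous_on {a..b} \<beta>" "continuous_on {a..b} \<gamma>"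
begin

lemma iterates_norm_bound:
  fixes A B :: "nat \<Rightarrow> real \<Rightarrow> complex"
  assumes A': "\<And>k x. x \<in> {a..b} \<Longrightarrow> (A k has_vector_derivative \<gamma> x * B k x) (at x within {a..b})"
    and B': "\<And>k x. x \<in> {a..b} \<Longrightarrow>
      (B (Suc k) has_vector_derivative \<alpha> x * A k x + \<beta> x * B k x) (at x within {a..b})"
    and A_x0: "\<And>k. A (Suc k) x0 = 0" and B_x0: "\<And>k. B (Suc k) x0 = 0"
    and A0: "\<And>x. x \<in> {a..b} \<Longrightarrow> norm (A 0 x) \<le> c"
    and B0: "\<And>x. x \<in> {a..b} \<Longrightarrow> norm (B 0 x) \<le> c"
    and Ca: "\<And>x. x \<in> {a..b} \<Longrightarrow> norm (\<alpha> x) \<le> Ca"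
    and Cb: "\<And>x. x \<in> {a..b} \<Longrightarrow> norm (\<beta> x) \<le> Cb"
    and Cg: "\<And>x. x \<in> {a..b} \<Longrightarrow> norm (\<gamma> x) \<le> Cg"
    and K: "Ca + Cb \<le> K" "Cg * (Ca + Cb) * (b - a) \<le> K"
    and x: "x \<in> {a..b}"
  shows "norm (A k x) \<le> c * K ^ k * \<bar>x - x0\<bar> ^ k / fact k
    \<and> norm (B k x) \<le> c * K ^ k * \<bar>x - x0\<bar> ^ k / fact k"
  using x
proof (induction k arbitrary: x)
  case 0
  then show ?case using A0 B0 by simp
next
  case (Suc k)
  have nonneg: "0 \<le> c" "0 \<le> Ca" "0 \<le> Cb" "0 \<le> Cg"
    using A0 Ca Cb Cg x0_in norm_ge_zero order_trans by blast+
  define M where "M = Ca + Cb"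
  have "0 \<le> M" "M \<le> K" "0 \<le> K"
    using nonneg K by (auto simp: M_def)
  have B'_bound: "norm (\<alpha> t * A k t + \<beta> t * B k t) \<le> (M * c * K ^ k / fact k) * \<bar>t - x0\<bar> ^ k"
    if t: "t \<in> {a..b}" for t
  proof -
    have "norm (\<alpha> t * A k t + \<beta> t * B k t) \<le> norm (\<alpha> t) * norm (A k t) + norm (\<beta> t) * norm (B k t)"
      by (metis norm_mult norm_triangle_ineq)
    also have "\<dots> \<le> Ca * (c * K ^ k * \<bar>t - x0\<bar> ^ k / fact k) + Cb * (c * K ^ k * \<bar>t - x0\<bar> ^ k / fact k)"
      using Suc.IH[OF t] Ca[OF t] Cb[OF t] nonneg by (intro add_mono mult_mono) auto
    finally show ?thesis by (simp add: M_def field_simps)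
  qed
  have B_Suc: "norm (B (Suc k) t) \<le> M * (c * K ^ k * \<bar>t - x0\<bar> ^ Suc k / fact (Suc k))"
    if "t \<in> {a..b}" for t
  proof -
    have "norm (B (Suc k) t) \<le> (M * c * K ^ k / fact k) * \<bar>t - x0\<bar> ^ Suc k / Suc k"
      by (rule norm_le_power_if_derivative_le_power[OF x0_in that B_x0 B' B'_bound])
    then show ?thesis by (simp add: field_simps)
  qed
  have A'_bound: "norm (\<gamma> t * B (Suc k) t) \<le> (Cg * M * c * K ^ k / fact (Suc k)) * \<bar>t - x0\<bar> ^ Suc k"
    if t: "t \<in> {a..b}" for t
  proof -
    have "norm (\<gamma> t * B (Suc k) t) \<le> Cg * (M * (c * K ^ k * \<bar>t - x0\<bar> ^ Suc k / fact (Suc k)))"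
      unfolding norm_mult using Cg[OF t] B_Suc[OF t] nonneg by (intro mult_mono) auto
    then show ?thesis by (simp add: field_simps)
  qed
  have "norm (A (Suc k) x) \<le> (Cg * M * c * K ^ k / fact (Suc k)) * \<bar>x - x0\<bar> ^ Suc (Suc k) / Suc (Suc k)"
    by (rule norm_le_power_if_derivative_le_power[OF x0_in Suc.prems A_x0 A' A'_bound])
  also have "\<dots> = Cg * M * (c * K ^ k * (\<bar>x - x0\<bar> ^ Suc k * \<bar>x - x0\<bar>) / fact (Suc (Suc k)))"
    by (simp add: field_simps)
  also have "\<dots> \<le> Cg * M * (c * K ^ k * (\<bar>x - x0\<bar> ^ Suc k * (b - a)) / fact (Suc k))"
    using Suc.prems x0_in nonneg \<open>0 \<le> M\<close> \<open>0 \<le> K\<close>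
    by (intro mult_left_mono frac_le mult_left_mono) (auto simp: fact_mono)
  also have "\<dots> = (Cg * M * (b - a)) * (c * K ^ k * \<bar>x - x0\<bar> ^ Suc k / fact (Suc k))"
    by (simp add: field_simps)
  also have "\<dots> \<le> K * (c * K ^ k * \<bar>x - x0\<bar> ^ Suc k / fact (Suc k))"
    using K nonneg \<open>0 \<le> K\<close> by (intro mult_right_mono) (auto simp: M_def)
  finally have "norm (A (Suc k) x) \<le> c * K ^ Suc k * \<bar>x - x0\<bar> ^ Suc k / fact (Suc k)"
    by (simp add: mult_ac)
  moreover have "norm (B (Suc k) x) \<le> c * K ^ Suc k * \<bar>x - x0\<bar> ^ Suc k / fact (Suc k)"
    using B_Suc[OF Suc.prems] mult_right_mono[OF \<open>M \<le> K\<close>, of "c * K ^ k * \<bar>x - x0\<bar> ^ Suc k / fact (Suc k)"]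
      nonneg \<open>0 \<le> K\<close> by (simp add: mult_ac)
  ultimately show ?case ..
qed

lemma iterates_summable_bound:
  fixes A B :: "nat \<Rightarrow> real \<Rightarrow> complex"
  assumes A': "\<And>k x. x \<in> {a..b} \<Longrightarrow> (A k has_vector_derivative \<gamma> x * B k x) (at x within {a..b})"
    and B0': "\<And>x. x \<in> {a..b} \<Longrightarrow> (B 0 has_vector_derivative 0) (at x within {a..b})"
    and B': "\<And>k x. x \<in> {a..b} \<Longrightarrow>
      (B (Suc k) has_vector_derivative \<alpha> x * A k x + \<beta> x * B k x) (at x within {a..b})"
    and A_x0: "\<And>k. A (Suc k) x0 = 0" and B_x0: "\<And>k. B (Suc k) x0 = 0"
  obtains M where "summable M" "\<And>k x. x \<in> {a..b} \<Longrightarrow> norm (A k x) \<le> M k \<and> norm (B k x) \<le> M k"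
proof -
  obtain cA where cA: "\<And>x. x \<in> {a..b} \<Longrightarrow> norm (A 0 x) \<le> cA"
    using bounded_on_interval[OF continuous_on_vector_derivative[OF A'[where k=0]]] by blast
  obtain cB where cB: "\<And>x. x \<in> {a..b} \<Longrightarrow> norm (B 0 x) \<le> cB"
    using bounded_on_interval[OF continuous_on_vector_derivative[OF B0']] by blast
  obtain Ca where Ca: "\<And>x. x \<in> {a..b} \<Longrightarrow> norm (\<alpha> x) \<le> Ca"
    using bounded_on_interval[OF continuous_coeffs(1)] by blast
  obtain Cb where Cb: "\<And>x. x \<in> {a..b} \<Longrightarrow> norm (\<beta> x) \<le> Cb"
    using bounded_on_interval[OF continuous_coeffs(2)] by blast
  obtain Cg where Cg: "\<And>x. x \<in> {a..b} \<Longrightarrow> norm (\<gamma> x) \<le> Cg"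
    using bounded_on_interval[OF continuous_coeffs(3)] by blast
  have "0 \<le> Ca" "0 \<le> Cb" "0 \<le> Cg"
    using Ca[OF x0_in] Cb[OF x0_in] Cg[OF x0_in] by (auto intro: order_trans[OF norm_ge_zero])
  define c where "c = max cA cB"
  define K where "K = (Ca + Cb) + Cg * (Ca + Cb) * (b - a)"
  have "0 \<le> Cg * (Ca + Cb) * (b - a)"
    using \<open>0 \<le> Ca\<close> \<open>0 \<le> Cb\<close> \<open>0 \<le> Cg\<close> x0_in by simp
  then have K: "Ca + Cb \<le> K" "Cg * (Ca + Cb) * (b - a) \<le> K" and "0 \<le> K"
    unfolding K_def using \<open>0 \<le> Ca\<close> \<open>0 \<le> Cb\<close> by linarith+
  have A0: "norm (A 0 x) \<le> c" and B0: "norm (B 0 x) \<le> c" if "x \<in> {a..b}" for x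
    using cA[OF that] cB[OF that] by (simp_all add: c_def le_max_iff_disj)
  have "0 \<le> c"
    using order_trans[OF norm_ge_zero A0[OF x0_in]] .
  define M where "M k = c * ((K * (b - a)) ^ k / fact k)" for k
  have "summable M"
    unfolding M_def using summable_exp_generic[of "K * (b - a)"]
    by (intro summable_mult) (simp add: divide_inverse mult.commute)
  moreover have "c * K ^ k * \<bar>x - x0\<bar> ^ k / fact k \<le> M k" if "x \<in> {a..b}" for k x
  proof -
    have "\<bar>x - x0\<bar> ^ k \<le> (b - a) ^ k"
      using that x0_in by (intro power_mono) auto
    then show ?thesis
      using \<open>0 \<le> c\<close> \<open>0 \<le> K\<close> by (simp add: M_def divide_right_mono mult_left_mono power_mult_distrib mult.assoc)
  qed
  ultimately show thesis
    using that iterates_norm_bound[OF A' B' A_x0 B_x0 A0 B0 Ca Cb Cg K] by (meson order_trans)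
qed

lemma series_solution:
  fixes A B :: "nat \<Rightarrow> real \<Rightarrow> complex"
  assumes A': "\<And>k x. x \<in> {a..b} \<Longrightarrow> (A k has_vector_derivative \<gamma> x * B k x) (at x within {a..b})"
    and B0': "\<And>x. x \<in> {a..b} \<Longrightarrow> (B 0 has_vector_derivative 0) (at x within {a..b})"
    and B': "\<And>k x. x \<in> {a..b} \<Longrightarrow>
      (B (Suc k) has_vector_derivative \<alpha> x * A k x + \<beta> x * B k x) (at x within {a..b})"
    and A_x0: "\<And>k. A (Suc k) x0 = 0" and B_x0: "\<And>k. B (Suc k) x0 = 0"
  obtains S T where
    "uniform_limit {a..b} (\<lambda>N x. \<Sum>k<N. A k x) S sequentially"
    "uniform_limit {a..b} (\<lambda>N x. \<Sum>k<N. B k x) T sequentially"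
    "\<And>x. x \<in> {a..b} \<Longrightarrow> (S has_vector_derivative \<gamma> x * T x) (at x within {a..b})"
    "\<And>x. x \<in> {a..b} \<Longrightarrow> (T has_vector_derivative \<alpha> x * S x + \<beta> x * T x) (at x within {a..b})"
    "S x0 = A 0 x0" "T x0 = B 0 x0"
proof -
  obtain M where "summable M" and A_M: "\<And>k x. x \<in> {a..b} \<Longrightarrow> norm (A k x) \<le> M k"
    and B_M: "\<And>k x. x \<in> {a..b} \<Longrightarrow> norm (B k x) \<le> M k"
    using iterates_summable_bound[OF A' B0' B' A_x0 B_x0] by metis
  define S where "S x = (\<Sum>k. A k x)" for x
  define T where "T x = (\<Sum>k. B k x)" for x
  have S_sums: "(\<lambda>k. A k x) sums S x" and T_sums: "(\<lambda>k. B k x) sums T x" if "x \<in> {a..b}" for x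
    unfolding S_def T_def
    using summable_comparison_test'[OF \<open>summable M\<close> A_M[OF that]]
      summable_comparison_test'[OF \<open>summable M\<close> B_M[OF that]] by (simp_all add: summable_sums)
  have S_lim: "uniform_limit {a..b} (\<lambda>N x. \<Sum>k<N. A k x) S sequentially"
    unfolding S_def using A_M \<open>summable M\<close> by (rule Weierstrass_m_test)
  have T_lim: "uniform_limit {a..b} (\<lambda>N x. \<Sum>k<N. B k x) T sequentially"
    unfolding T_def using B_M \<open>summable M\<close> by (rule Weierstrass_m_test)
  have "continuous_on {a..b} (B k)" for k
    using continuous_on_vector_derivative[OF B0'] continuous_on_vector_derivative[OF B'] by (cases k) auto
  then have "continuous_on {a..b} (\<lambda>x. \<Sum>k<N. A k x)" "continuous_on {a..b} (\<lambda>x. \<Sum>k<N. B k x)" for N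
    using continuous_on_vector_derivative[OF A'] by (auto intro!: continuous_on_sum)
  then have "continuous_on {a..b} S" "continuous_on {a..b} T"
    using uniform_limit_theorem[OF _ S_lim] uniform_limit_theorem[OF _ T_lim] by simp_all
  have "(S has_vector_derivative \<gamma> x * T x) (at x within {a..b})" if "x \<in> {a..b}" for x
  proof (rule has_vector_derivative_series[OF _ A' _ S_sums that])
    show "uniform_limit {a..b} (\<lambda>N x. \<Sum>k<N. \<gamma> x * B k x) (\<lambda>x. \<gamma> x * T x) sequentially"
      unfolding sum_distrib_left[symmetric]
      using T_lim continuous_coeffs(3) \<open>continuous_on {a..b} T\<close> by (rule uniform_limit_mult_continuous)
  qed simp
  moreover have "(T has_vector_derivative \<alpha> x * S x + \<beta> x * T x) (at x within {a..b})"
    if "x \<in> {a..b}" for x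
  proof -
    define B' where "B' k y = (case k of 0 \<Rightarrow> 0 | Suc j \<Rightarrow> \<alpha> y * A j y + \<beta> y * B j y)" for k y
    have "(\<Sum>k<Suc N. B' k y) = \<alpha> y * (\<Sum>k<N. A k y) + \<beta> y * (\<Sum>k<N. B k y)" for N y
      unfolding sum.lessThan_Suc_shift by (simp add: B'_def sum.distrib sum_distrib_left)
    moreover have "uniform_limit {a..b} (\<lambda>N y. \<alpha> y * (\<Sum>k<N. A k y) + \<beta> y * (\<Sum>k<N. B k y))
        (\<lambda>y. \<alpha> y * S y + \<beta> y * T y) sequentially"
      using S_lim T_lim continuous_coeffs \<open>continuous_on {a..b} S\<close> \<open>continuous_on {a..b} T\<close>
      by (intro uniform_limit_add uniform_limit_mult_continuous)
    ultimately have "uniform_limit {a..b} (\<lambda>N y. \<Sum>k<N. B' k y) (\<lambda>y. \<alpha> y * S y + \<beta> y * T y) sequentially"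
      using filterlim_sequentially_Suc[of "\<lambda>N y. \<Sum>k<N. B' k y"] by simp
    moreover have "(B k has_vector_derivative B' k y) (at y within {a..b})" if "y \<in> {a..b}" for k y
      using B0'[OF that] B'[OF that] by (cases k) (simp_all add: B'_def)
    ultimately show ?thesis
      using T_sums that by (intro has_vector_derivative_series[OF convex_real_interval(5)])
  qed
  moreover have "(\<lambda>k. A k x0) sums A 0 x0" "(\<lambda>k. B k x0) sums B 0 x0"
    using sums_Suc_iff[of "\<lambda>k. A k x0" 0] sums_Suc_iff[of "\<lambda>k. B k x0" 0] by (simp_all add: A_x0 B_x0)
  then have "S x0 = A 0 x0" "T x0 = B 0 x0"
    using sums_unique2[OF S_sums[OF x0_in]] sums_unique2[OF T_sums[OF x0_in]] by simp_all
  ultimately show ?thesis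
    using that S_lim T_lim by blast
qed

end

section \<open>Generalized formal powers and multi-indices\<close>

(* XtL and XL differ only in the levels that apply an R_i step (odd ones for XtL, even ones for XL)
   and in their level-0 values; formal_power abstracts over both. *)
primrec formal_power :: "(nat \<Rightarrow> bool) \<Rightarrow> ((nat \<Rightarrow> int) \<Rightarrow> complex) \<Rightarrow> nat
    \<Rightarrow> (real \<Rightarrow> complex) \<Rightarrow> (real \<Rightarrow> complex) \<Rightarrow> (nat \<Rightarrow> real \<Rightarrow> complex)
    \<Rightarrow> (nat \<Rightarrow> real \<Rightarrow> complex) \<Rightarrow> real \<Rightarrow> real set \<Rightarrow> nat \<Rightarrow> (nat \<Rightarrow> int) \<Rightarrow> real \<Rightarrow> complex" where
  "formal_power e b d p u0 r s x0 I 0 j = (\<lambda>x. b j)"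
| "formal_power e b d p u0 r s x0 I (Suc k) j = (\<lambda>x.
     if (\<exists>i<d. j i < 0) then 0
     else if e (Suc k) then
       (let i = (THE i. i < d \<and> odd (j i)) in
        of_nat (Suc k) * cint x0 (\<lambda>t. u0 t * Rop r s I i
            (\<lambda>t'. u0 t' * formal_power e b d p u0 r s x0 I k (dminus j i) t') t) x)
     else of_nat (Suc k) * cint x0
            (\<lambda>t. (\<Sum>i<d. formal_power e b d p u0 r s x0 I k (dminus j i) t) / (p t * u0 t ^ 2)) x)"

definition Xtilde_init :: "nat \<Rightarrow> (nat \<Rightarrow> int) \<Rightarrow> complex" where
  "Xtilde_init d j = (if \<forall>i<d. j i = 0 then 1 else 0)"

definition X_init :: "nat \<Rightarrow> (nat \<Rightarrow> int) \<Rightarrow> complex" where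
  "X_init d m = (if \<exists>i<d. \<forall>l<d. m l = (if l = i then -1 else 0) then 1 / of_nat d else 0)"

lemma XtL_eq_formal_power: "XtL d p u0 r s x0 I k = formal_power odd (Xtilde_init d) d p u0 r s x0 I k"
  by (induction k) (auto simp: fun_eq_iff Xtilde_init_def)

lemma XL_eq_formal_power: "XL d p u0 r s x0 I k = formal_power even (X_init d) d p u0 r s x0 I k"
  by (induction k) (auto simp: fun_eq_iff X_init_def)

definition admissible :: "nat \<Rightarrow> (nat \<Rightarrow> int) \<Rightarrow> bool" where
  "admissible d j \<longleftrightarrow> (\<forall>a<d. \<forall>b<d. odd (j a) \<longrightarrow> odd (j b) \<longrightarrow> a = b)"

lemma sum_dminus: "i < d \<Longrightarrow> (\<Sum>l<d. dminus j i l) = (\<Sum>l<d. j l) - 1"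
proof -
  assume i: "i < d"
  have "(\<Sum>l<d. dminus j i l) = (\<Sum>l<d. j l - (if l = i then 1 else 0))"
    by (intro sum.cong) (auto simp: dminus_def)
  also have "\<dots> = (\<Sum>l<d. j l) - 1"
    using i by (simp add: sum_subtractf)
  finally show ?thesis .
qed

lemma odd_sum_imp_odd_entry:
  fixes j :: "nat \<Rightarrow> int"
  assumes "odd (\<Sum>l<d. j l)"
  obtains i where "i < d" "odd (j i)"
proof -
  have "\<exists>i<d. odd (j i)"
  proof (rule ccontr)
    assume "\<not> (\<exists>i<d. odd (j i))"
    then have "{l\<in>{..<d}. odd (j l)} = {}"
      by auto
    then have "even (\<Sum>l<d. j l)"
      by (simp only: even_sum_iff[OF finite_lessThan]) simp
    with assms show False by simp
  qed
  then show ?thesis using that by blast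
qed

lemma admissible_even_sum_imp_even:
  fixes j :: "nat \<Rightarrow> int"
  assumes "admissible d j" "even (\<Sum>l<d. j l)" "i < d"
  shows "even (j i)"
proof (rule ccontr)
  assume "odd (j i)"
  with assms have "{l\<in>{..<d}. odd (j l)} = {i}"
    by (auto simp: admissible_def)
  then have "odd (\<Sum>l<d. j l)"
    by (simp only: even_sum_iff[OF finite_lessThan]) simp
  with assms show False by simp
qed

definition level :: "nat \<Rightarrow> nat \<Rightarrow> (nat \<Rightarrow> nat) set" where
  "level d k = {n. (\<forall>i. d \<le> i \<longrightarrow> n i = 0) \<and> msize d n = k}"

definition twice :: "(nat \<Rightarrow> nat) \<Rightarrow> nat \<Rightarrow> int" where
  "twice n = (\<lambda>i. 2 * int (n i))"

definition twice_minus :: "(nat \<Rightarrow> nat) \<Rightarrow> nat \<Rightarrow> nat \<Rightarrow> int" where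
  "twice_minus n i = (\<lambda>l. 2 * int (n l) - (if l = i then 1 else 0))"

lemma finite_level: "finite (level d k)"
proof -
  have "level d k \<subseteq> (\<lambda>f i. if i < d then f i else 0) ` (PiE {..<d} (\<lambda>_. {..k}))"
  proof
    fix n assume n: "n \<in> level d k"
    have le: "n i \<le> k" if "i < d" for i
    proof -
      have "n i \<le> (\<Sum>l<d. n l)" using that by (intro member_le_sum) auto
      then show ?thesis using n by (simp add: level_def msize_def)
    qed
    have "n = (\<lambda>i. if i < d then restrict n {..<d} i else 0)"
      using n by (auto simp: level_def fun_eq_iff)
    moreover have "restrict n {..<d} \<in> PiE {..<d} (\<lambda>_. {..k})" using le by auto
    ultimately show "n \<in> (\<lambda>f i. if i < d then f i else 0) ` (PiE {..<d} (\<lambda>_. {..k}))" by blast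
  qed
  moreover have "finite ((\<lambda>f i. if i < d then f i else 0) ` (PiE {..<d} (\<lambda>_. {..k})))"
    by (intro finite_imageI finite_PiE) auto
  ultimately show ?thesis by (rule finite_subset)
qed

lemma midx_eq_UN_level: "midx d N = (\<Union>k\<in>{..N}. level d k)"
  by (auto simp: midx_def level_def msize_def)

lemma sum_midx_by_level: "(\<Sum>n\<in>midx d N. f n) = (\<Sum>k\<le>N. \<Sum>n\<in>level d k. f n)"
  unfolding midx_eq_UN_level
  by (rule sum.UNION_disjoint) (auto simp: level_def intro: finite_level[unfolded level_def])

lemma msize_incr: "i < d \<Longrightarrow> msize d (m(i := Suc (m i))) = Suc (msize d m)"
proof -
  assume i: "i < d"
  have "(\<Sum>l<d. (m(i := Suc (m i))) l) = (\<Sum>l<d. m l + (if l = i then 1 else 0))"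
    by (intro sum.cong) auto
  also have "\<dots> = Suc (\<Sum>l<d. m l)" using i by (simp add: sum.distrib)
  finally show ?thesis by (simp add: msize_def)
qed

lemma Suc_msize_decr: "i < d \<Longrightarrow> n i \<noteq> 0 \<Longrightarrow> Suc (msize d (n(i := n i - 1))) = msize d n"
proof -
  assume i: "i < d" "n i \<noteq> 0"
  have "n = (n(i := n i - 1))(i := Suc ((n(i := n i - 1)) i))" using i by auto
  then have "msize d n = msize d ((n(i := n i - 1))(i := Suc ((n(i := n i - 1)) i)))" by simp
  also have "\<dots> = Suc (msize d (n(i := n i - 1)))" using i by (intro msize_incr)
  finally show ?thesis by simp
qed

lemma lampow_incr: "i < d \<Longrightarrow> lampow d lam (m(i := Suc (m i))) = lam i * lampow d lam m"
proof -
  assume i: "i < d"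
  have "(\<Prod>l<d. lam l ^ (m(i := Suc (m i))) l) = (\<Prod>l<d. lam l ^ m l * (if l = i then lam l else 1))"
    by (intro prod.cong) auto
  also have "\<dots> = (\<Prod>l<d. lam l ^ m l) * lam i" using i by (simp add: prod.distrib)
  finally show ?thesis by (simp add: lampow_def mult.commute)
qed

lemma sum_level_Suc_reindex:
  assumes i: "i < d"
  shows "(\<Sum>n\<in>level d (Suc k). if n i = 0 then 0 else F n) = (\<Sum>m\<in>level d k. F (m(i := Suc (m i))))"
proof -
  have "(\<Sum>n\<in>level d (Suc k). if n i = 0 then 0 else F n) = (\<Sum>n\<in>{n\<in>level d (Suc k). n i \<noteq> 0}. F n)"
    by (auto simp: sum.inter_filter[OF finite_level] intro: sum.cong)
  also have "\<dots> = (\<Sum>m\<in>level d k. F (m(i := Suc (m i))))"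
  proof (rule sum.reindex_bij_witness[where j="\<lambda>n. n(i := n i - 1)" and i="\<lambda>m. m(i := Suc (m i))"])
    fix m assume m: "m \<in> level d k"
    show "(m(i := Suc (m i)))(i := (m(i := Suc (m i))) i - 1) = m" by auto
    show "m(i := Suc (m i)) \<in> {n \<in> level d (Suc k). n i \<noteq> 0}"
      using m i by (auto simp: level_def msize_incr)
  next
    fix n assume n: "n \<in> {n \<in> level d (Suc k). n i \<noteq> 0}"
    show "n(i := n i - 1) \<in> level d k"
      using n i Suc_msize_decr[of i d n] by (auto simp: level_def)
    show "(n(i := n i - 1))(i := Suc ((n(i := n i - 1)) i)) = n"
      using n by auto
    then show "F ((n(i := n i - 1))(i := Suc ((n(i := n i - 1)) i))) = F n"
      by simp
  qed
  finally show ?thesis .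
qed

lemma dminus_twice: "dminus (twice n) i = twice_minus n i"
  by (auto simp: dminus_def twice_def twice_minus_def fun_eq_iff)

lemma dminus_twice_minus_incr: "dminus (twice_minus (m(i := Suc (m i))) i) i = twice m"
  by (auto simp: dminus_def twice_def twice_minus_def fun_eq_iff)

lemma sum_twice: "(\<Sum>l<d. twice n l) = 2 * int (msize d n)"
  by (simp add: twice_def msize_def sum_distrib_left)

lemma sum_twice_minus: "i < d \<Longrightarrow> (\<Sum>l<d. twice_minus n i l) = 2 * int (msize d n) - 1"
  using sum_dminus[of i d "twice n"] by (simp add: dminus_twice[symmetric] sum_twice)

lemma admissible_twice: "admissible d (twice n)"
  by (auto simp: admissible_def twice_def)

lemma admissible_twice_minus: "admissible d (twice_minus n i)"
  by (auto simp: admissible_def twice_minus_def split: if_splits)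

lemma twice_nonneg: "\<not> (\<exists>l<d. twice n l < 0)"
  by (auto simp: twice_def)

lemma twice_minus_neg_iff: "i < d \<Longrightarrow> (\<exists>l<d. twice_minus n i l < 0) \<longleftrightarrow> n i = 0"
  by (auto simp: twice_minus_def split: if_splits)

lemma the_odd_twice_minus: "i < d \<Longrightarrow> (THE l. l < d \<and> odd (twice_minus n i l)) = i"
  by (rule the_equality) (auto simp: twice_minus_def split: if_splits)

lemma level_0: "level d 0 = {\<lambda>_. 0}"
proof (intro equalityI subsetI)
  fix n assume n: "n \<in> level d 0"
  then have "\<forall>i<d. n i = 0" by (auto simp: level_def msize_def)
  then show "n \<in> {\<lambda>_. 0}" using n by (auto simp: level_def fun_eq_iff not_less[symmetric])
qed (auto simp: level_def msize_def)

lemma lampow_0: "lampow d lam (\<lambda>_. 0) = 1"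
  by (simp add: lampow_def)

lemma finite_midx: "finite (midx d N)"
  unfolding midx_eq_UN_level by (auto intro: finite_level)

lemma zero_midx: "(\<lambda>_. 0) \<in> midx d N"
  by (simp add: midx_def)

section \<open>Reduction to the first-order system\<close>

(* du and w stand for u0' and (p u0')'. *)
locale base_solution =
  fixes d :: nat and x0 x1 x2 :: real and p q u0 du w :: "real \<Rightarrow> complex"
    and r s :: "nat \<Rightarrow> real \<Rightarrow> complex" and lam :: "nat \<Rightarrow> complex"
  assumes d_pos: "d \<ge> 1" and x1_less_x2: "x1 < x2" and x0_in: "x0 \<in> {x1..x2}"
    and continuous_p: "continuous_on {x1..x2} p"
    and continuous_r: "\<And>i. i < d \<Longrightarrow> continuous_on {x1..x2} (r i)"
    and continuous_s: "\<And>i. i < d \<Longrightarrow> continuous_on {x1..x2} (s i)"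
    and p_nonzero: "\<And>x. x \<in> {x1..x2} \<Longrightarrow> p x \<noteq> 0"
    and u0_nonzero: "\<And>x. x \<in> {x1..x2} \<Longrightarrow> u0 x \<noteq> 0"
    and u0_deriv: "\<And>x. x \<in> {x1..x2} \<Longrightarrow> (u0 has_vector_derivative du x) (at x within {x1..x2})"
    and p_du_deriv: "\<And>x. x \<in> {x1..x2} \<Longrightarrow> ((\<lambda>t. p t * du t) has_vector_derivative w x) (at x within {x1..x2})"
    and u0_equation: "\<And>x. x \<in> {x1..x2} \<Longrightarrow> w x + q x * u0 x = 0"
begin

abbreviation "I \<equiv> {x1..x2}"

abbreviation fp where "fp e b k j \<equiv> formal_power e b d p u0 r s x0 I k j"

lemma continuous_u0: "continuous_on I u0"
  using u0_deriv by (rule continuous_on_vector_derivative)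

lemma continuous_du: "continuous_on I du"
proof -
  have "continuous_on I (\<lambda>t. p t * du t / p t)"
    using continuous_on_vector_derivative[OF p_du_deriv] continuous_p p_nonzero
    by (intro continuous_on_divide) auto
  then show ?thesis
    by (rule continuous_on_eq) (simp add: p_nonzero)
qed

lemma vector_derivative_eq:
  fixes f :: "real \<Rightarrow> complex"
  assumes "x \<in> I" "(f has_vector_derivative f') (at x within I)"
  shows "vector_derivative f (at x within I) = f'"
  using x1_less_x2 assms by (rule vector_derivative_within_closed_interval)

definition gamma :: "real \<Rightarrow> complex" where
  "gamma x = 1 / (p x * u0 x ^ 2)"

fun fp_deriv :: "(nat \<Rightarrow> bool) \<Rightarrow> ((nat \<Rightarrow> int) \<Rightarrow> complex) \<Rightarrow> nat \<Rightarrow> (nat \<Rightarrow> int) \<Rightarrow> real \<Rightarrow> complex" where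
  "fp_deriv e b 0 j = (\<lambda>x. 0)"
| "fp_deriv e b (Suc k) j = (\<lambda>x.
     if (\<exists>i<d. j i < 0) then 0
     else if e (Suc k) then
       (let i = (THE i. i < d \<and> odd (j i)) in
        of_nat (Suc k) * (u0 x * Rop r s I i (\<lambda>t'. u0 t' * fp e b k (dminus j i) t') x))
     else of_nat (Suc k) * (gamma x * (\<Sum>i<d. fp e b k (dminus j i) x)))"

definition C1_pair :: "(real \<Rightarrow> complex) \<Rightarrow> (real \<Rightarrow> complex) \<Rightarrow> bool" where
  "C1_pair F F' \<longleftrightarrow> continuous_on I F' \<and> (\<forall>x\<in>I. (F has_vector_derivative F' x) (at x within I))"

lemma C1_pair_scaled_cint:
  "continuous_on I h \<Longrightarrow> C1_pair (\<lambda>x. of_nat n * cint x0 h x) (\<lambda>x. of_nat n * h x)"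
  using x0_in unfolding C1_pair_def
  by (auto intro!: continuous_intros has_vector_derivative_mult_right has_vector_derivative_cint)

lemma C1_pair_fp_R_step:
  assumes nonneg: "\<not> (\<exists>l<d. j l < 0)" and "e (Suc k)" "admissible d j" "i < d" "odd (j i)"
    and IH: "C1_pair (fp e b k (dminus j i)) (fp_deriv e b k (dminus j i))"
  shows "C1_pair (fp e b (Suc k) j) (fp_deriv e b (Suc k) j)"
proof -
  have the_i: "(THE i. i < d \<and> odd (j i)) = i"
    using assms(3-5) by (intro the_equality) (auto simp: admissible_def)
  define F where "F = fp e b k (dminus j i)"
  define F' where "F' = fp_deriv e b k (dminus j i)"
  have F': "(F has_vector_derivative F' x) (at x within I)" if "x \<in> I" for x
    using IH that by (simp add: C1_pair_def F_def F'_def)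
  define h where "h = (\<lambda>t. u0 t * Rop r s I i (\<lambda>t'. u0 t' * F t') t)"
  have "continuous_on I (\<lambda>t. u0 t * (r i t * (u0 t * F t) + s i t * (u0 t * F' t + du t * F t)))"
    using IH continuous_on_vector_derivative[OF F'] continuous_u0 continuous_du
      continuous_r[OF \<open>i < d\<close>] continuous_s[OF \<open>i < d\<close>]
    unfolding C1_pair_def F'_def[symmetric] by (intro continuous_intros) auto
  then have "continuous_on I h"
  proof (rule continuous_on_eq)
    fix t assume "t \<in> I"
    with vector_derivative_eq[OF this has_vector_derivative_mult[OF u0_deriv F']]
    show "u0 t * (r i t * (u0 t * F t) + s i t * (u0 t * F' t + du t * F t)) = h t"
      by (simp add: h_def Rop_def)
  qed
  moreover have "fp e b (Suc k) j = (\<lambda>x. of_nat (Suc k) * cint x0 h x)"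
    "fp_deriv e b (Suc k) j = (\<lambda>x. of_nat (Suc k) * h x)"
    by (rule ext, simp only: formal_power.simps fp_deriv.simps if_not_P[OF nonneg] if_P[OF \<open>e (Suc k)\<close>]
        Let_def the_i, simp add: F_def h_def)+
  ultimately show ?thesis
    by (simp add: C1_pair_scaled_cint del: of_nat_Suc)
qed

lemma C1_pair_fp_integral_step:
  assumes nonneg: "\<not> (\<exists>l<d. j l < 0)" and "\<not> e (Suc k)"
    and IH: "\<And>i. i < d \<Longrightarrow> C1_pair (fp e b k (dminus j i)) (fp_deriv e b k (dminus j i))"
  shows "C1_pair (fp e b (Suc k) j) (fp_deriv e b (Suc k) j)"
proof -
  have "continuous_on I (fp e b k (dminus j i))" if "i < d" for i
    using IH[OF that] continuous_on_vector_derivative[of I] unfolding C1_pair_def by blast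
  then have "continuous_on I (\<lambda>t. gamma t * (\<Sum>i<d. fp e b k (dminus j i) t))"
    unfolding gamma_def using continuous_p continuous_u0 p_nonzero u0_nonzero
    by (intro continuous_intros) auto
  moreover have "fp e b (Suc k) j = (\<lambda>x. of_nat (Suc k) * cint x0 (\<lambda>t. gamma t * (\<Sum>i<d. fp e b k (dminus j i) t)) x)"
    by (rule ext, simp only: formal_power.simps if_not_P[OF nonneg] if_not_P[OF \<open>\<not> e (Suc k)\<close>])
       (simp add: gamma_def)
  moreover have "fp_deriv e b (Suc k) j = (\<lambda>x. of_nat (Suc k) * (gamma x * (\<Sum>i<d. fp e b k (dminus j i) x)))"
    by (rule ext, simp only: fp_deriv.simps if_not_P[OF nonneg] if_not_P[OF \<open>\<not> e (Suc k)\<close>])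
  ultimately show ?thesis
    by (simp add: C1_pair_scaled_cint del: of_nat_Suc)
qed

lemma C1_pair_fp:
  assumes alternating: "\<And>k. e (Suc k) \<longleftrightarrow> \<not> e k"
  shows "admissible d j \<Longrightarrow> e k \<longleftrightarrow> odd (\<Sum>i<d. j i) \<Longrightarrow> C1_pair (fp e b k j) (fp_deriv e b k j)"
proof (induction k arbitrary: j)
  case 0
  then show ?case by (simp add: C1_pair_def continuous_on_const)
next
  case (Suc k)
  show ?case
  proof (cases "\<exists>i<d. j i < 0")
    case True
    then show ?thesis by (simp add: C1_pair_def continuous_on_const)
  next
    case nonneg: False
    show ?thesis
    proof (cases "e (Suc k)")
      case True
      then have "odd (\<Sum>i<d. j i)"
        using Suc.prems(2) by simp
      then obtain i where i: "i < d" "odd (j i)"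
        by (rule odd_sum_imp_odd_entry)
      have "admissible d (dminus j i)"
        using i Suc.prems(1) by (auto simp: admissible_def dminus_def)
      moreover have "e k \<longleftrightarrow> odd (\<Sum>l<d. dminus j i l)"
        using i \<open>odd (\<Sum>i<d. j i)\<close> True alternating[of k] by (simp add: sum_dminus)
      ultimately show ?thesis
        using C1_pair_fp_R_step[OF nonneg True Suc.prems(1) i Suc.IH] by blast
    next
      case False
      then have "even (\<Sum>i<d. j i)"
        using Suc.prems(2) by simp
      have "admissible d (dminus j i)" if "i < d" for i
        using admissible_even_sum_imp_even[OF Suc.prems(1) \<open>even (\<Sum>i<d. j i)\<close>] that
        by (auto simp: admissible_def dminus_def)
      moreover have "e k \<longleftrightarrow> odd (\<Sum>l<d. dminus j i l)" if "i < d" for i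
        using \<open>even (\<Sum>i<d. j i)\<close> False alternating[of k] that by (simp add: sum_dminus)
      ultimately show ?thesis
        using C1_pair_fp_integral_step[OF nonneg False Suc.IH] by blast
    qed
  qed
qed

definition level_sum :: "(nat \<Rightarrow> (nat \<Rightarrow> int) \<Rightarrow> real \<Rightarrow> complex) \<Rightarrow> nat \<Rightarrow> nat \<Rightarrow> real \<Rightarrow> complex" where
  "level_sum F L k x = (\<Sum>n\<in>level d k. F L (twice n) x * lampow d lam n / of_nat (fact L))"

definition level_sum_minus :: "(nat \<Rightarrow> (nat \<Rightarrow> int) \<Rightarrow> real \<Rightarrow> complex) \<Rightarrow> nat \<Rightarrow> nat \<Rightarrow> real \<Rightarrow> complex" where
  "level_sum_minus F L k x = (\<Sum>n\<in>level d k. (\<Sum>i<d. F L (twice_minus n i) x) * lampow d lam n / of_nat (fact L))"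

lemma has_vector_derivative_level_sum:
  assumes "\<And>k. e (Suc k) \<longleftrightarrow> \<not> e k" and "\<not> e L" and "x \<in> I"
  shows "(level_sum (fp e b) L k has_vector_derivative level_sum (fp_deriv e b) L k x) (at x within I)"
proof -
  have "(fp e b L (twice n) has_vector_derivative fp_deriv e b L (twice n) x) (at x within I)" for n
    using C1_pair_fp[where e=e and j="twice n" and k=L and b=b, OF assms(1) admissible_twice] assms(2,3)
    by (simp add: C1_pair_def sum_twice)
  then show ?thesis
    unfolding level_sum_def[abs_def]
    by (intro has_vector_derivative_sum has_vector_derivative_divide has_vector_derivative_mult_left)
qed

lemma has_vector_derivative_level_sum_minus:
  assumes "\<And>k. e (Suc k) \<longleftrightarrow> \<not> e k" and "e L" and "x \<in> I"
  shows "(level_sum_minus (fp e b) L k has_vector_derivative level_sum_minus (fp_deriv e b) L k x) (at x within I)"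
proof -
  have "(fp e b L (twice_minus n i) has_vector_derivative fp_deriv e b L (twice_minus n i) x) (at x within I)"
    if "i < d" for n i
    using C1_pair_fp[where e=e and j="twice_minus n i" and k=L and b=b, OF assms(1) admissible_twice_minus]
      assms(2,3) that by (simp add: C1_pair_def sum_twice_minus)
  then show ?thesis
    unfolding level_sum_minus_def[abs_def]
    by (intro has_vector_derivative_sum has_vector_derivative_divide has_vector_derivative_mult_left) auto
qed

lemma Suc_mult_div_fact: "of_nat (Suc L) * a * c / of_nat (fact (Suc L)) = a * c / (of_nat (fact L) :: complex)"
proof -
  have "(of_nat (fact (Suc L)) :: complex) = of_nat (Suc L) * of_nat (fact L)"
    by (simp only: fact_Suc of_nat_mult of_nat_id)
  then show ?thesis
    by (simp add: field_simps del: of_nat_Suc)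
qed

lemma level_sum_fp_deriv_Suc:
  assumes "\<not> e (Suc L)"
  shows "level_sum (fp_deriv e b) (Suc L) k x = gamma x * level_sum_minus (fp e b) L k x"
  unfolding level_sum_def level_sum_minus_def sum_distrib_left
proof (rule sum.cong[OF refl])
  fix n
  have "fp_deriv e b (Suc L) (twice n) x = of_nat (Suc L) * (gamma x * (\<Sum>i<d. fp e b L (twice_minus n i) x))"
    using assms by (simp add: twice_nonneg dminus_twice del: of_nat_Suc)
  then show "fp_deriv e b (Suc L) (twice n) x * lampow d lam n / of_nat (fact (Suc L)) =
      gamma x * ((\<Sum>i<d. fp e b L (twice_minus n i) x) * lampow d lam n / of_nat (fact L))"
    using Suc_mult_div_fact[of L "gamma x * (\<Sum>i<d. fp e b L (twice_minus n i) x)" "lampow d lam n"]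
    by (simp add: mult.assoc)
qed

lemma Rop_u0_fp:
  assumes "\<And>k. e (Suc k) \<longleftrightarrow> \<not> e k" and "\<not> e L" and "x \<in> I"
  shows "Rop r s I i (\<lambda>t. u0 t * fp e b L (twice m) t) x
    = r i x * (u0 x * fp e b L (twice m) x)
      + s i x * (u0 x * fp_deriv e b L (twice m) x + du x * fp e b L (twice m) x)"
proof -
  have "(fp e b L (twice m) has_vector_derivative fp_deriv e b L (twice m) x) (at x within I)"
    using C1_pair_fp[where e=e and j="twice m" and k=L and b=b, OF assms(1) admissible_twice] assms(2,3)
    by (simp add: C1_pair_def sum_twice)
  then have "((\<lambda>t. u0 t * fp e b L (twice m) t) has_vector_derivative
      u0 x * fp_deriv e b L (twice m) x + du x * fp e b L (twice m) x) (at x within I)"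
    by (intro has_vector_derivative_mult u0_deriv \<open>x \<in> I\<close>)
  then show ?thesis
    using vector_derivative_eq[OF \<open>x \<in> I\<close>] by (simp add: Rop_def)
qed

lemma level_sum_minus_fp_deriv_Suc:
  assumes alternating: "\<And>k. e (Suc k) \<longleftrightarrow> \<not> e k" and "e (Suc L)" and x: "x \<in> I"
  shows "level_sum_minus (fp_deriv e b) (Suc L) (Suc k) x
    = u0 x * (\<Sum>i<d. lam i * (r i x * u0 x * level_sum (fp e b) L k x
        + s i x * (u0 x * level_sum (fp_deriv e b) L k x + du x * level_sum (fp e b) L k x)))"
proof -
  have "\<not> e L"
    using alternating[of L] \<open>e (Suc L)\<close> by simp
  define F where "F i n = of_nat (Suc L) * (u0 x * Rop r s I i
      (\<lambda>t. u0 t * fp e b L (dminus (twice_minus n i) i) t) x) * lampow d lam n / of_nat (fact (Suc L))" for i n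
  define H where "H i m = r i x * (u0 x * fp e b L (twice m) x)
      + s i x * (u0 x * fp_deriv e b L (twice m) x + du x * fp e b L (twice m) x)" for i m
  have F_Suc: "F i (m(i := Suc (m i))) = u0 x * (lam i * H i m) * lampow d lam m / of_nat (fact L)"
    if "i < d" for i m
  proof -
    have "F i (m(i := Suc (m i)))
        = of_nat (Suc L) * (u0 x * (lam i * H i m)) * lampow d lam m / of_nat (fact (Suc L))"
      using that by (simp add: F_def H_def dminus_twice_minus_incr Rop_u0_fp[OF alternating \<open>\<not> e L\<close> x]
          lampow_incr mult_ac del: of_nat_Suc)
    then show ?thesis
      by (simp only: Suc_mult_div_fact)
  qed
  have "level_sum_minus (fp_deriv e b) (Suc L) (Suc k) x
      = (\<Sum>n\<in>level d (Suc k). \<Sum>i<d. fp_deriv e b (Suc L) (twice_minus n i) x * lampow d lam n / of_nat (fact (Suc L)))"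
    unfolding level_sum_minus_def by (simp add: sum_distrib_right sum_divide_distrib)
  also have "\<dots> = (\<Sum>i<d. \<Sum>n\<in>level d (Suc k). if n i = 0 then 0 else F i n)"
    using \<open>e (Suc L)\<close>
    by (subst sum.swap, intro sum.cong refl)
       (auto simp: twice_minus_neg_iff the_odd_twice_minus F_def Let_def)
  also have "\<dots> = (\<Sum>i<d. \<Sum>m\<in>level d k. F i (m(i := Suc (m i))))"
    by (intro sum.cong refl sum_level_Suc_reindex) auto
  also have "\<dots> = u0 x * (\<Sum>i<d. lam i * (r i x * u0 x * level_sum (fp e b) L k x
        + s i x * (u0 x * level_sum (fp_deriv e b) L k x + du x * level_sum (fp e b) L k x)))"
    unfolding sum_distrib_left level_sum_def
    by (intro sum.cong refl)
       (simp add: F_Suc H_def sum_distrib_left sum.distrib ring_distribs sum_divide_distrib add_divide_distrib mult_ac)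
  finally show ?thesis .
qed

definition alpha :: "real \<Rightarrow> complex" where
  "alpha x = u0 x * (\<Sum>i<d. lam i * (r i x * u0 x + s i x * du x))"

definition beta :: "real \<Rightarrow> complex" where
  "beta x = (\<Sum>i<d. lam i * s i x / p x)"

sublocale coupled_linear_system x1 x2 x0 alpha beta gamma
proof
  show "x0 \<in> I" by (rule x0_in)
  show "continuous_on I alpha"
    unfolding alpha_def[abs_def] using continuous_u0 continuous_du continuous_r continuous_s
    by (intro continuous_intros) auto
  show "continuous_on I beta"
    unfolding beta_def[abs_def] using continuous_p p_nonzero continuous_s
    by (intro continuous_intros) auto
  show "continuous_on I gamma"
    unfolding gamma_def[abs_def] using continuous_p p_nonzero continuous_u0 u0_nonzero
    by (intro continuous_intros) auto
qed

lemma alpha_beta_combination: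
  assumes "x \<in> I"
  shows "u0 x * (\<Sum>i<d. lam i * (r i x * u0 x * a + s i x * (u0 x * (gamma x * c) + du x * a)))
    = alpha x * a + beta x * c"
proof -
  have "u0 x * (lam i * (r i x * u0 x * a + s i x * (u0 x * (gamma x * c) + du x * a)))
      = u0 x * (lam i * (r i x * u0 x + s i x * du x)) * a + lam i * s i x / p x * c" for i
    using p_nonzero[OF assms] u0_nonzero[OF assms] by (simp add: gamma_def field_simps power2_eq_square)
  then show ?thesis
    by (simp add: alpha_def beta_def sum_distrib_left sum_distrib_right sum.distrib mult_ac)
qed

lemma fp_Suc_x0: "fp e b (Suc L) j x0 = 0"
  by (simp add: Let_def)

lemma level_sum_Suc_x0: "level_sum (fp e b) (Suc L) k x0 = 0"
  unfolding level_sum_def by (simp only: fp_Suc_x0) simp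

lemma level_sum_minus_Suc_x0: "level_sum_minus (fp e b) (Suc L) k x0 = 0"
  unfolding level_sum_minus_def by (simp only: fp_Suc_x0) simp

(* A1 k, B1 k, A2 k, B2 k: the parts of total degree k of the series for u1 / u0, V1, u2 / u0, V2. *)
definition A1 :: "nat \<Rightarrow> real \<Rightarrow> complex" where
  "A1 k x = (\<Sum>n\<in>level d k.
     Xtilde d p u0 r s x0 I (twice n) x * lampow d lam n / of_nat (fact (2 * k)))"

definition B1 :: "nat \<Rightarrow> real \<Rightarrow> complex" where
  "B1 k x = (\<Sum>n\<in>level d k.
     (\<Sum>i<d. Xtilde d p u0 r s x0 I (twice_minus n i) x) * lampow d lam n / of_nat (fact (2 * k - 1)))"

definition A2 :: "nat \<Rightarrow> real \<Rightarrow> complex" where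
  "A2 k x = (\<Sum>n\<in>level d k.
     Xgen d p u0 r s x0 I (twice n) x * lampow d lam n / of_nat (fact (2 * k + 1)))"

definition B2 :: "nat \<Rightarrow> real \<Rightarrow> complex" where
  "B2 k x = (\<Sum>n\<in>level d k.
     (\<Sum>i<d. Xgen d p u0 r s x0 I (twice_minus n i) x) * lampow d lam n / of_nat (fact (2 * k)))"

lemma Xtilde_twice: "Xtilde d p u0 r s x0 I (twice n) = fp odd (Xtilde_init d) (2 * msize d n) (twice n)"
proof -
  have "nat (2 * int (msize d n)) = 2 * msize d n" by simp
  then show ?thesis by (simp add: Xtilde_def sum_twice XtL_eq_formal_power)
qed

lemma Xtilde_twice_minus:
  "i < d \<Longrightarrow> msize d n \<noteq> 0
    \<Longrightarrow> Xtilde d p u0 r s x0 I (twice_minus n i) = fp odd (Xtilde_init d) (2 * msize d n - 1) (twice_minus n i)"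
proof -
  assume "i < d" "msize d n \<noteq> 0"
  moreover have "nat (2 * int (msize d n) - 1) = 2 * msize d n - 1" by simp
  ultimately show ?thesis by (simp add: Xtilde_def sum_twice_minus XtL_eq_formal_power)
qed

lemma Xtilde_twice_minus_0: "i < d \<Longrightarrow> msize d n = 0 \<Longrightarrow> Xtilde d p u0 r s x0 I (twice_minus n i) = (\<lambda>_. 0)"
  by (simp add: Xtilde_def sum_twice_minus)

lemma X_twice: "Xgen d p u0 r s x0 I (twice n) = fp even (X_init d) (2 * msize d n + 1) (twice n)"
proof -
  have "nat (2 * int (msize d n) + 1) = 2 * msize d n + 1" by simp
  then show ?thesis by (simp add: Xgen_def sum_twice XL_eq_formal_power)
qed

lemma X_twice_minus: "i < d \<Longrightarrow> Xgen d p u0 r s x0 I (twice_minus n i) = fp even (X_init d) (2 * msize d n) (twice_minus n i)"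
proof -
  assume "i < d"
  moreover have "nat (2 * int (msize d n) - 1 + 1) = 2 * msize d n" by simp
  ultimately show ?thesis by (simp add: Xgen_def sum_twice_minus XL_eq_formal_power)
qed

lemma A1_eq: "A1 k = level_sum (fp odd (Xtilde_init d)) (2 * k) k"
  unfolding A1_def[abs_def] level_sum_def[abs_def]
  by (intro ext sum.cong refl) (auto simp: level_def Xtilde_twice)

lemma B1_Suc_eq: "B1 (Suc k) = level_sum_minus (fp odd (Xtilde_init d)) (Suc (2 * k)) (Suc k)"
  unfolding B1_def[abs_def] level_sum_minus_def[abs_def]
  by (intro ext sum.cong refl) (auto simp: level_def Xtilde_twice_minus)

lemma B1_0: "B1 0 x = 0"
  unfolding B1_def by (intro sum.neutral ballI) (auto simp: level_def Xtilde_twice_minus_0)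

lemma A2_eq: "A2 k = level_sum (fp even (X_init d)) (Suc (2 * k)) k"
  unfolding A2_def[abs_def] level_sum_def[abs_def]
  by (intro ext sum.cong refl) (auto simp: level_def X_twice)

lemma B2_eq: "B2 k = level_sum_minus (fp even (X_init d)) (2 * k) k"
  unfolding B2_def[abs_def] level_sum_minus_def[abs_def]
  by (intro ext sum.cong refl) (auto simp: level_def X_twice_minus)

lemma level_sum_fp_deriv_A1: "level_sum (fp_deriv odd (Xtilde_init d)) (2 * k) k x = gamma x * B1 k x"
proof (cases k)
  case (Suc k')
  have "2 * Suc k' = Suc (Suc (2 * k'))" by simp
  then show ?thesis
    unfolding Suc by (simp only:) (subst level_sum_fp_deriv_Suc, simp_all add: B1_Suc_eq)
qed (simp add: level_sum_def B1_0)

lemma A1_deriv: "x \<in> I \<Longrightarrow> (A1 k has_vector_derivative gamma x * B1 k x) (at x within I)"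
  using has_vector_derivative_level_sum[of odd "2 * k" x "Xtilde_init d" k]
  by (simp add: A1_eq level_sum_fp_deriv_A1)

lemma B1_Suc_deriv: "x \<in> I \<Longrightarrow> (B1 (Suc k) has_vector_derivative alpha x * A1 k x + beta x * B1 k x) (at x within I)"
  using has_vector_derivative_level_sum_minus[of odd "Suc (2 * k)" x "Xtilde_init d" "Suc k"]
  by (simp add: B1_Suc_eq level_sum_minus_fp_deriv_Suc level_sum_fp_deriv_A1 alpha_beta_combination
      flip: A1_eq)

lemma B1_0_deriv: "(B1 0 has_vector_derivative 0) (at x within I)"
proof -
  have "B1 0 = (\<lambda>_. 0)"
    by (rule ext) (rule B1_0)
  then show ?thesis by simp
qed

lemma A1_Suc_x0: "A1 (Suc k) x0 = 0"
proof -
  have "2 * Suc k = Suc (Suc (2 * k))" by simp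
  then show ?thesis unfolding A1_eq by (simp only: level_sum_Suc_x0)
qed

lemma B1_Suc_x0: "B1 (Suc k) x0 = 0"
  unfolding B1_Suc_eq by (rule level_sum_minus_Suc_x0)

lemma A1_0: "A1 0 x = 1"
  by (simp add: A1_eq level_sum_def level_0 lampow_0 twice_def Xtilde_init_def)

lemma level_sum_fp_deriv_A2: "level_sum (fp_deriv even (X_init d)) (Suc (2 * k)) k x = gamma x * B2 k x"
  by (subst level_sum_fp_deriv_Suc) (simp_all add: B2_eq)

lemma A2_deriv: "x \<in> I \<Longrightarrow> (A2 k has_vector_derivative gamma x * B2 k x) (at x within I)"
  using has_vector_derivative_level_sum[of even "Suc (2 * k)" x "X_init d" k]
  by (simp add: A2_eq level_sum_fp_deriv_A2)

lemma B2_0_deriv: "x \<in> I \<Longrightarrow> (B2 0 has_vector_derivative 0) (at x within I)"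
  using has_vector_derivative_level_sum_minus[of even 0 x "X_init d" 0]
  by (simp add: B2_eq level_sum_minus_def)

lemma B2_Suc_eq: "B2 (Suc k) = level_sum_minus (fp even (X_init d)) (Suc (Suc (2 * k))) (Suc k)"
  by (simp add: B2_eq)

lemma B2_Suc_deriv: "x \<in> I \<Longrightarrow> (B2 (Suc k) has_vector_derivative alpha x * A2 k x + beta x * B2 k x) (at x within I)"
  using has_vector_derivative_level_sum_minus[of even "Suc (Suc (2 * k))" x "X_init d" "Suc k"]
  by (simp add: B2_Suc_eq level_sum_minus_fp_deriv_Suc level_sum_fp_deriv_A2 alpha_beta_combination
      flip: A2_eq)

lemma A2_x0: "A2 k x0 = 0"
  unfolding A2_eq by (rule level_sum_Suc_x0)

lemma B2_Suc_x0: "B2 (Suc k) x0 = 0"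
  unfolding B2_Suc_eq by (rule level_sum_minus_Suc_x0)

lemma B2_0: "B2 0 x = 1"
proof -
  have "X_init d (twice_minus (\<lambda>_. 0) i) = 1 / of_nat d" if "i < d" for i
    using that by (auto simp: X_init_def twice_minus_def intro!: exI[of _ i])
  then have "B2 0 x = (\<Sum>i<d. 1 / of_nat d)"
    by (simp add: B2_eq level_sum_minus_def level_0 lampow_0)
  also have "\<dots> = 1"
    using d_pos by simp
  finally show ?thesis .
qed

lemma has_vector_derivative_u0_mult:
  assumes "\<And>x. x \<in> I \<Longrightarrow> (S has_vector_derivative gamma x * T x) (at x within I)" and "x \<in> I"
  shows "((\<lambda>x. u0 x * S x) has_vector_derivative du x * S x + T x / (p x * u0 x)) (at x within I)"
proof -
  have "((\<lambda>x. u0 x * S x) has_vector_derivative u0 x * (gamma x * T x) + du x * S x) (at x within I)"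
    by (intro has_vector_derivative_mult u0_deriv assms)
  moreover have "u0 x * (gamma x * T x) + du x * S x = du x * S x + T x / (p x * u0 x)"
    using u0_nonzero[OF assms(2)] by (simp add: gamma_def field_simps power2_eq_square)
  ultimately show ?thesis by simp
qed

lemma has_vector_derivative_inverse_u0:
  assumes "x \<in> I"
  shows "((\<lambda>t. inverse (u0 t)) has_vector_derivative - (du x / u0 x ^ 2)) (at x within I)"
proof -
  have "((\<lambda>t. inverse (u0 t)) has_derivative (\<lambda>h. - (inverse (u0 x) * (h *\<^sub>R du x) * inverse (u0 x)))) (at x within I)"
    using Deriv.has_derivative_inverse[where f=u0 and f'="\<lambda>h. h *\<^sub>R du x" and S=I and x=x] u0_nonzero[OF assms] u0_deriv[OF assms]
    by (simp add: has_vector_derivative_def)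
  moreover have "(\<lambda>h. - (inverse (u0 x) * (h *\<^sub>R du x) * inverse (u0 x))) = (\<lambda>h. h *\<^sub>R (- (du x / u0 x ^ 2)))"
    using u0_nonzero[OF assms] by (auto simp: fun_eq_iff scaleR_conv_of_real field_simps power2_eq_square)
  ultimately show ?thesis by (simp add: has_vector_derivative_def)
qed

lemma solves_u0_mult:
  assumes S': "\<And>x. x \<in> I \<Longrightarrow> (S has_vector_derivative gamma x * T x) (at x within I)"
    and T': "\<And>x. x \<in> I \<Longrightarrow> (T has_vector_derivative alpha x * S x + beta x * T x) (at x within I)"
  shows "solves d I p q r s lam (\<lambda>x. u0 x * S x)"
  unfolding solves_def
proof (intro exI ballI conjI)
  fix x assume x: "x \<in> I"
  show "((\<lambda>x. u0 x * S x) has_vector_derivative du x * S x + T x / (p x * u0 x)) (at x within I)"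
    using S' x by (rule has_vector_derivative_u0_mult)
  have D: "((\<lambda>t. p t * du t * S t + T t * inverse (u0 t)) has_vector_derivative
      (p x * du x * (gamma x * T x) + w x * S x)
      + (T x * - (du x / u0 x ^ 2) + (alpha x * S x + beta x * T x) * inverse (u0 x))) (at x within I)"
    by (intro has_vector_derivative_add has_vector_derivative_mult p_du_deriv S' T'
        has_vector_derivative_inverse_u0 x)
  have E: "(p x * du x * (gamma x * T x) + w x * S x)
      + (T x * - (du x / u0 x ^ 2) + (alpha x * S x + beta x * T x) * inverse (u0 x))
      = w x * S x + (alpha x * S x + beta x * T x) / u0 x"
    using u0_nonzero[OF x] p_nonzero[OF x] by (simp add: gamma_def field_simps power2_eq_square)
  show "((\<lambda>t. p t * (du t * S t + T t / (p t * u0 t))) has_vector_derivative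
      w x * S x + (alpha x * S x + beta x * T x) / u0 x) (at x within I)"
    by (rule has_vector_derivative_transform[OF x _ D[unfolded E]])
       (use p_nonzero u0_nonzero in \<open>simp add: field_simps\<close>)
  have "(\<Sum>i<d. lam i * (r i x * (u0 x * S x) + s i x * (du x * S x + T x / (p x * u0 x)))) * u0 x
      = u0 x * (\<Sum>i<d. lam i * (r i x * u0 x * S x + s i x * (u0 x * (gamma x * T x) + du x * S x)))"
    unfolding sum_distrib_left sum_distrib_right
    using u0_nonzero[OF x] p_nonzero[OF x]
    by (intro sum.cong refl) (simp add: gamma_def field_simps power2_eq_square)
  also have "\<dots> = alpha x * S x + beta x * T x"
    by (rule alpha_beta_combination[OF x])
  finally have "(\<Sum>i<d. lam i * (r i x * (u0 x * S x) + s i x * (du x * S x + T x / (p x * u0 x))))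
      = (alpha x * S x + beta x * T x) / u0 x"
    using u0_nonzero[OF x] by (simp add: field_simps)
  then show "w x * S x + (alpha x * S x + beta x * T x) / u0 x + q x * (u0 x * S x) =
      (\<Sum>i<d. lam i * (r i x * (u0 x * S x) + s i x * (du x * S x + T x / (p x * u0 x))))"
    using u0_equation[OF x] by (simp add: eq_neg_iff_add_eq_0[symmetric])
qed

lemma sum_midx_A1:
  "(\<Sum>n\<in>midx d N. Xtilde d p u0 r s x0 I (\<lambda>i. 2 * int (n i)) x * lampow d lam n / of_nat (fact (2 * msize d n)))
    = (\<Sum>k<Suc N. A1 k x)"
  unfolding sum_midx_by_level lessThan_Suc_atMost A1_def twice_def[symmetric]
  by (intro sum.cong refl) (auto simp: level_def)

lemma sum_midx_A2:
  "(\<Sum>n\<in>midx d N. Xgen d p u0 r s x0 I (\<lambda>i. 2 * int (n i)) x * lampow d lam n / of_nat (fact (2 * msize d n + 1)))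
    = (\<Sum>k<Suc N. A2 k x)"
  unfolding sum_midx_by_level lessThan_Suc_atMost A2_def twice_def[symmetric]
  by (intro sum.cong refl) (auto simp: level_def)

lemma sum_midx_B1:
  "(\<Sum>n\<in>midx d N - {\<lambda>_. 0}. (\<Sum>i<d. Xtilde d p u0 r s x0 I (\<lambda>l. 2 * int (n l) - (if l = i then 1 else 0)) x)
      * lampow d lam n / of_nat (fact (2 * msize d n - 1)))
    = (\<Sum>k<Suc N. B1 k x)"
proof -
  define f where "f n = (\<Sum>i<d. Xtilde d p u0 r s x0 I (twice_minus n i) x) * lampow d lam n
      / of_nat (fact (2 * msize d n - 1))" for n
  have "f (\<lambda>_. 0) = 0"
    by (simp add: f_def Xtilde_twice_minus_0 msize_def)
  then have "(\<Sum>n\<in>midx d N - {\<lambda>_. 0}. f n) = (\<Sum>n\<in>midx d N. f n)"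
    by (simp add: sum.remove[OF finite_midx zero_midx])
  also have "\<dots> = (\<Sum>k<Suc N. B1 k x)"
    unfolding sum_midx_by_level lessThan_Suc_atMost B1_def f_def
    by (intro sum.cong refl) (auto simp: level_def)
  finally show ?thesis
    by (simp add: f_def twice_minus_def)
qed

lemma sum_midx_B2:
  "(\<Sum>n\<in>midx d N. (\<Sum>i<d. Xgen d p u0 r s x0 I (\<lambda>l. 2 * int (n l) - (if l = i then 1 else 0)) x)
      * lampow d lam n / of_nat (fact (2 * msize d n)))
    = (\<Sum>k<Suc N. B2 k x)"
  unfolding sum_midx_by_level lessThan_Suc_atMost B2_def twice_minus_def[symmetric]
  by (intro sum.cong refl) (auto simp: level_def)

lemma u0_mult_series_solution:
  fixes A B :: "nat \<Rightarrow> real \<Rightarrow> complex"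
  assumes A': "\<And>k x. x \<in> I \<Longrightarrow> (A k has_vector_derivative gamma x * B k x) (at x within I)"
    and B0': "\<And>x. x \<in> I \<Longrightarrow> (B 0 has_vector_derivative 0) (at x within I)"
    and B': "\<And>k x. x \<in> I \<Longrightarrow> (B (Suc k) has_vector_derivative alpha x * A k x + beta x * B k x) (at x within I)"
    and "\<And>k. A (Suc k) x0 = 0" "\<And>k. B (Suc k) x0 = 0"
    and F: "\<And>N x. F N x = (\<Sum>k<Suc N. A k x)" and G: "\<And>N x. G N x = (\<Sum>k<Suc N. B k x)"
  obtains u V where
    "uniform_limit I (\<lambda>N x. u0 x * F N x) u sequentially"
    "\<And>x. x \<in> I \<Longrightarrow> (\<lambda>N. G N x) \<longlonglongrightarrow> V x"
    "solves d I p q r s lam u"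
    "\<And>x. x \<in> I \<Longrightarrow>
      (u has_vector_derivative vector_derivative u0 (at x within I) / u0 x * u x + V x / (p x * u0 x)) (at x within I)"
    "u x0 = u0 x0 * A 0 x0" "V x0 = B 0 x0"
proof -
  obtain S T where S: "uniform_limit I (\<lambda>N x. \<Sum>k<N. A k x) S sequentially"
    and T: "uniform_limit I (\<lambda>N x. \<Sum>k<N. B k x) T sequentially"
    and S': "\<And>x. x \<in> I \<Longrightarrow> (S has_vector_derivative gamma x * T x) (at x within I)"
    and T': "\<And>x. x \<in> I \<Longrightarrow> (T has_vector_derivative alpha x * S x + beta x * T x) (at x within I)"
    and "S x0 = A 0 x0" "T x0 = B 0 x0"
    using series_solution[OF A' B0' B' assms(4,5)] by blast
  show thesis
  proof (rule that[of "\<lambda>x. u0 x * S x" T])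
    show "uniform_limit I (\<lambda>N x. u0 x * F N x) (\<lambda>x. u0 x * S x) sequentially"
      unfolding F
      using filterlim_compose[OF S filterlim_Suc] continuous_u0 continuous_on_vector_derivative[OF S']
      by (rule uniform_limit_mult_continuous)
    show "(\<lambda>N. G N x) \<longlonglongrightarrow> T x" if "x \<in> I" for x
      unfolding G using LIMSEQ_Suc[OF tendsto_uniform_limitI[OF T that]] .
    show "solves d I p q r s lam (\<lambda>x. u0 x * S x)"
      using S' T' by (rule solves_u0_mult)
    show "((\<lambda>x. u0 x * S x) has_vector_derivative
        vector_derivative u0 (at x within I) / u0 x * (u0 x * S x) + T x / (p x * u0 x)) (at x within I)"
      if "x \<in> I" for x
      using has_vector_derivative_u0_mult[OF S' that] vector_derivative_eq[OF that u0_deriv[OF that]]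
        u0_nonzero[OF that] by simp
  qed (simp_all add: \<open>S x0 = A 0 x0\<close> \<open>T x0 = B 0 x0\<close>)
qed

lemma first_solution:
  obtains u V where
    "uniform_limit I (\<lambda>N x. u0 x * (\<Sum>n\<in>midx d N.
        Xtilde d p u0 r s x0 I (\<lambda>i. 2 * int (n i)) x * lampow d lam n / of_nat (fact (2 * msize d n))))
      u sequentially"
    "\<And>x. x \<in> I \<Longrightarrow> (\<lambda>N. \<Sum>n\<in>midx d N - {\<lambda>_. 0}.
        (\<Sum>i<d. Xtilde d p u0 r s x0 I (\<lambda>l. 2 * int (n l) - (if l = i then 1 else 0)) x)
          * lampow d lam n / of_nat (fact (2 * msize d n - 1))) \<longlonglongrightarrow> V x"
    "solves d I p q r s lam u"
    "\<And>x. x \<in> I \<Longrightarrow>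
      (u has_vector_derivative vector_derivative u0 (at x within I) / u0 x * u x + V x / (p x * u0 x)) (at x within I)"
    "u x0 = u0 x0" "V x0 = 0"
proof -
  show thesis
    by (rule u0_mult_series_solution[OF A1_deriv B1_0_deriv B1_Suc_deriv A1_Suc_x0 B1_Suc_x0 sum_midx_A1 sum_midx_B1,
        unfolded A1_0 B1_0 mult_1_right]) (assumption | rule that)+
qed

lemma second_solution:
  obtains u V where
    "uniform_limit I (\<lambda>N x. u0 x * (\<Sum>n\<in>midx d N.
        Xgen d p u0 r s x0 I (\<lambda>i. 2 * int (n i)) x * lampow d lam n / of_nat (fact (2 * msize d n + 1))))
      u sequentially"
    "\<And>x. x \<in> I \<Longrightarrow> (\<lambda>N. \<Sum>n\<in>midx d N.
        (\<Sum>i<d. Xgen d p u0 r s x0 I (\<lambda>l. 2 * int (n l) - (if l = i then 1 else 0)) x)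
          * lampow d lam n / of_nat (fact (2 * msize d n))) \<longlonglongrightarrow> V x"
    "solves d I p q r s lam u"
    "\<And>x. x \<in> I \<Longrightarrow>
      (u has_vector_derivative vector_derivative u0 (at x within I) / u0 x * u x + V x / (p x * u0 x)) (at x within I)"
    "u x0 = 0" "V x0 = 1"
proof -
  show thesis
    by (rule u0_mult_series_solution[OF A2_deriv B2_0_deriv B2_Suc_deriv A2_x0 B2_Suc_x0 sum_midx_A2 sum_midx_B2,
        unfolded A2_x0 B2_0 mult_zero_right]) (assumption | rule that)+
qed

end

theorem mainTheorem7:
  fixes d :: nat and x0 x1 x2 :: real
    and p q u0 :: "real \<Rightarrow> complex" and r s :: "nat \<Rightarrow> real \<Rightarrow> complex"
    and lam :: "nat \<Rightarrow> complex"
  assumes "d \<ge> 1" and "x1 < x2" and "x0 \<in> {x1..x2}"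
    and "continuous_on {x1..x2} p" and "continuous_on {x1..x2} q"
    and "\<And>i. i < d \<Longrightarrow> continuous_on {x1..x2} (r i)"
    and "\<And>i. i < d \<Longrightarrow> continuous_on {x1..x2} (s i)"
    and "\<exists>p'. continuous_on {x1..x2} p' \<and>
           (\<forall>x\<in>{x1..x2}. (p has_vector_derivative p' x) (at x within {x1..x2}))"
    and "\<And>x. x \<in> {x1..x2} \<Longrightarrow> p x \<noteq> 0"
    and "solves d {x1..x2} p q r s (\<lambda>_. 0) u0"
    and "\<And>x. x \<in> {x1..x2} \<Longrightarrow> u0 x \<noteq> 0"
  shows "\<exists>u1 u2 V1 V2.
    uniform_limit {x1..x2}
      (\<lambda>N x. u0 x * (\<Sum>n\<in>midx d N.
          Xtilde d p u0 r s x0 {x1..x2} (\<lambda>i. 2 * int (n i)) x * lampow d lam n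
            / of_nat (fact (2 * msize d n))))
      u1 sequentially
  \<and> uniform_limit {x1..x2}
      (\<lambda>N x. u0 x * (\<Sum>n\<in>midx d N.
          Xgen d p u0 r s x0 {x1..x2} (\<lambda>i. 2 * int (n i)) x * lampow d lam n
            / of_nat (fact (2 * msize d n + 1))))
      u2 sequentially
  \<and> solves d {x1..x2} p q r s lam u1
  \<and> solves d {x1..x2} p q r s lam u2
  \<and> (\<forall>a b :: complex. (\<forall>x\<in>{x1..x2}. a * u1 x + b * u2 x = 0) \<longrightarrow> a = 0 \<and> b = 0)
  \<and> (\<forall>x\<in>{x1..x2}.
        (\<lambda>N. \<Sum>n\<in>midx d N - {\<lambda>_. 0}.
           (\<Sum>i<d. Xtilde d p u0 r s x0 {x1..x2}
                      (\<lambda>l. 2 * int (n l) - (if l = i then 1 else 0)) x) * lampow d lam n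
             / of_nat (fact (2 * msize d n - 1)))
        \<longlonglongrightarrow> V1 x)
  \<and> (\<forall>x\<in>{x1..x2}.
        (\<lambda>N. \<Sum>n\<in>midx d N.
           (\<Sum>i<d. Xgen d p u0 r s x0 {x1..x2}
                      (\<lambda>l. 2 * int (n l) - (if l = i then 1 else 0)) x) * lampow d lam n
             / of_nat (fact (2 * msize d n)))
        \<longlonglongrightarrow> V2 x)
  \<and> (\<forall>x\<in>{x1..x2}. (u1 has_vector_derivative
        (vector_derivative u0 (at x within {x1..x2}) / u0 x * u1 x + V1 x / (p x * u0 x)))
        (at x within {x1..x2}))
  \<and> (\<forall>x\<in>{x1..x2}. (u2 has_vector_derivative
        (vector_derivative u0 (at x within {x1..x2}) / u0 x * u2 x + V2 x / (p x * u0 x)))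
        (at x within {x1..x2}))
  \<and> u1 x0 = u0 x0
  \<and> vector_derivative u1 (at x0 within {x1..x2}) = vector_derivative u0 (at x0 within {x1..x2})
  \<and> u2 x0 = 0
  \<and> vector_derivative u2 (at x0 within {x1..x2}) = 1 / (p x0 * u0 x0)"
proof -
  obtain du w where "\<forall>x\<in>{x1..x2}. (u0 has_vector_derivative du x) (at x within {x1..x2})
      \<and> ((\<lambda>t. p t * du t) has_vector_derivative w x) (at x within {x1..x2})
      \<and> w x + q x * u0 x = (\<Sum>i<d. 0 * (r i x * u0 x + s i x * du x))"
    using \<open>solves d {x1..x2} p q r s (\<lambda>_. 0) u0\<close> unfolding solves_def by blast
  then interpret base_solution d x0 x1 x2 p q u0 du w r s lam
    using assms by unfold_locales auto
  show ?thesis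
    apply (rule first_solution, rule second_solution)
    subgoal premises prems for u1 V1 u2 V2
    proof -
      have u1': "(u1 has_vector_derivative vector_derivative u0 (at x0 within I)) (at x0 within I)"
        using prems(4)[OF x0_in] prems(5,6) u0_nonzero[OF x0_in] by simp
      have u2': "(u2 has_vector_derivative 1 / (p x0 * u0 x0)) (at x0 within I)"
        using prems(10)[OF x0_in] prems(11,12) by simp
      have indep: "\<forall>a b. (\<forall>x\<in>I. a * u1 x + b * u2 x = 0) \<longrightarrow> a = 0 \<and> b = 0"
        using prems(5,11) u0_nonzero[OF x0_in] p_nonzero[OF x0_in]
        by (intro linearly_independent_by_values_at[OF x1_less_x2 x0_in _ _ u2']) auto
      show ?thesis
        by (rule exI[of _ u1], rule exI[of _ u2], rule exI[of _ V1], rule exI[of _ V2])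
           (intro conjI ballI; (assumption | rule prems indep vector_derivative_eq[OF x0_in u1']
              vector_derivative_eq[OF x0_in u2'])+)
    qed
    done
qed

end
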